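(* For $q\in\{1,2\}$ and all $M\in\mathbb{R}^{n\times n}$, $$\|\mathcal{U}_b(M)\|_{b,2^q}\le2^{q-1}\|M\|_{b,2^q}.$$
   Context: Fix a block structure $0=n_0<n_1<\dots<n_m=n$; block $(i,j)$, $0\le i,j\le m-1$, consists of rows $n_i+1..n_{i+1}$ and columns $n_j+1..n_{j+1}$. The block upper triangular truncation $\mathcal{U}_b(M)$ has blocks $\mathcal{U}_b(M)(i,j)=M(i,j)$ for $i\le j$ and $0$ for $i>j$. $\mathcal{D}_b\subset\mathbb{R}^{n\times m}$ is the set of $X$ with $X_{ij}=0$ whenever $i\notin[n_{j-1}+1,n_j]$, and $\|A\|_{b,p}:=\sup\{\|AX\|_{S_p}:X\in\mathcal{D}_b,\ \|X\|_{S_\infty}\le1\}$ with $\|\cdot\|_{S_p}$ the Schatten $p$-norm. *)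

theory Defs
  imports "Jordan_Normal_Form.Char_Poly"
begin

text \<open>Singular values of a real matrix A (with multiplicity): square roots of the
eigenvalues of A^T A, i.e. of the roots of its characteristic polynomial
(A^T A is symmetric positive semidefinite, so this polynomial splits over the reals).\<close>
definition sing_vals :: "real mat \<Rightarrow> real multiset" where
  "sing_vals A = image_mset sqrt (proots (char_poly (transpose_mat A * A)))"

definition schatten :: "real \<Rightarrow> real mat \<Rightarrow> real" where
  "schatten p A = (\<Sum>s\<in>#sing_vals A. s powr p) powr (1 / p)"

definition schatten_inf :: "real mat \<Rightarrow> real" where
  "schatten_inf A = Max (insert 0 (set_mset (sing_vals A)))"

text \<open>Block structure 0 = ns 0 < ns 1 < ... < ns m = n. Indices are 0-based:
block i consists of the (0-based) indices ns i ..< ns (Suc i).\<close>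
definition block_structure :: "(nat \<Rightarrow> nat) \<Rightarrow> nat \<Rightarrow> nat \<Rightarrow> bool" where
  "block_structure ns m n \<longleftrightarrow> ns 0 = 0 \<and> ns m = n \<and> (\<forall>i<m. ns i < ns (Suc i))"

definition block_upper :: "(nat \<Rightarrow> nat) \<Rightarrow> nat \<Rightarrow> real mat \<Rightarrow> real mat" where
  "block_upper ns m M = mat (dim_row M) (dim_col M) (\<lambda>(r, c).
     if (\<exists>i j. i \<le> j \<and> j < m \<and> ns i \<le> r \<and> r < ns (Suc i) \<and> ns j \<le> c \<and> c < ns (Suc j))
     then M $$ (r, c) else 0)"

definition Db :: "(nat \<Rightarrow> nat) \<Rightarrow> nat \<Rightarrow> nat \<Rightarrow> real mat set" where
  "Db ns m n = {X \<in> carrier_mat n m. \<forall>r<n. \<forall>j<m. \<not> (ns j \<le> r \<and> r < ns (Suc j)) \<longrightarrow> X $$ (r, j) = 0}"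

definition bnorm :: "(nat \<Rightarrow> nat) \<Rightarrow> nat \<Rightarrow> nat \<Rightarrow> real \<Rightarrow> real mat \<Rightarrow> real" where
  "bnorm ns m n p A = Sup {schatten p (A * X) | X. X \<in> Db ns m n \<and> schatten_inf X \<le> 1}"

end

theory Submission
  imports Defs "Jordan_Normal_Form.Schur_Decomposition"
begin

text \<open>For \<open>X \<in> D_b\<close> the product \<open>U_b(M) X\<close> is \<open>S = M X\<close> with the entry \<open>(r, j)\<close> kept only
when row \<open>r\<close> lies in one of the blocks \<open>0, \<dots>, j\<close>; call this masked matrix \<open>T\<close>. The mask is
monotone in the column index. For \<open>p = 2\<close> the Schatten norm is the Frobenius norm, which
masking can only decrease. For \<open>p = 4\<close> we have \<open>\<parallel>A\<parallel>\<^sub>4\<^sup>4 = \<parallel>A\<^sup>T A\<parallel>\<^sub>F\<^sup>2\<close>; monotonicity of the mask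
gives \<open>(T\<^sup>T T)\<^sub>i\<^sub>j = (T\<^sup>T S)\<^sub>i\<^sub>j\<close> for \<open>i \<le> j\<close>, so \<open>\<parallel>T\<parallel>\<^sub>4\<^sup>4 \<le> 2 \<parallel>T\<^sup>T S\<parallel>\<^sub>F\<^sup>2\<close>, while
\<open>\<parallel>T\<^sup>T S\<parallel>\<^sub>F\<^sup>2 = \<langle>T T\<^sup>T, S S\<^sup>T\<rangle> \<le> \<parallel>T\<parallel>\<^sub>4\<^sup>4 / 4 + \<parallel>S\<parallel>\<^sub>4\<^sup>4\<close>. Hence \<open>\<parallel>T\<parallel>\<^sub>4 \<le> \<surd>2 \<parallel>S\<parallel>\<^sub>4\<close>, which is even
better than the constant 2, and taking suprema over \<open>X\<close> gives the theorem.

To express the Schatten norms through matrix entries, note that the eigenvalues \<open>e\<close> of \<open>A\<^sup>T A\<close>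
are real and nonnegative, so its characteristic polynomial splits over the reals and a Schur
decomposition gives \<open>tr (A\<^sup>T A) = \<Sum> e\<close> and \<open>tr ((A\<^sup>T A)\<^sup>2) = \<Sum> e\<^sup>2\<close>.\<close>

section \<open>Eigenvalues of \<open>A\<^sup>T A\<close>\<close>

lemma mult_mat_vec_of_real_conjugate:
  fixes A :: "real mat" and v :: "complex vec"
  assumes "A \<in> carrier_mat k n" and "v \<in> carrier_vec n"
  shows "map_mat complex_of_real A *\<^sub>v conjugate v = conjugate (map_mat complex_of_real A *\<^sub>v v)"
proof (rule eq_vecI)
  fix i assume "i < dim_vec (conjugate (map_mat complex_of_real A *\<^sub>v v))"
  then have i: "i < k" using assms by simp
  have "conjugate (row (map_mat complex_of_real A) i) = row (map_mat complex_of_real A) i"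
    using assms i by (intro eq_vecI) auto
  then have "conjugate (row (map_mat complex_of_real A) i \<bullet> v) = row (map_mat complex_of_real A) i \<bullet> conjugate v"
    using assms i conjugate_sprod_vec[of "row (map_mat complex_of_real A) i" n v] by simp
  then show "(map_mat complex_of_real A *\<^sub>v conjugate v) $ i = conjugate (map_mat complex_of_real A *\<^sub>v v) $ i"
    using assms i by simp
qed (use assms in simp)

text \<open>Here \<open>\<le>\<close> is the partial order on \<^typ>\<open>complex\<close> from \<^theory>\<open>HOL-Library.Complex_Order\<close>,
so the conclusion says that \<open>a\<close> is a nonnegative real.\<close>

lemma gram_eigenvalue_nonneg:
  fixes A :: "real mat"
  assumes A: "A \<in> carrier_mat k n"
    and ev: "eigenvalue (map_mat complex_of_real (transpose_mat A * A)) a"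
  shows "a \<ge> 0"
proof -
  let ?C = "map_mat complex_of_real A"
  have C: "?C \<in> carrier_mat k n" using A by simp
  have "map_mat complex_of_real (transpose_mat A * A) = transpose_mat ?C * ?C"
    using A by (simp add: of_real_hom.mat_hom_mult[of _ n k _ n] map_mat_transpose)
  then obtain v where v: "v \<in> carrier_vec n" "v \<noteq> 0\<^sub>v n"
    and eig: "(transpose_mat ?C * ?C) *\<^sub>v v = a \<cdot>\<^sub>v v"
    using ev A unfolding eigenvalue_def eigenvector_def by auto
  define w where "w = ?C *\<^sub>v v"
  have w: "w \<in> carrier_vec k" unfolding w_def using C v by simp
  have "a * (v \<bullet>c v) = (a \<cdot>\<^sub>v v) \<bullet>c v"
    using v by simp
  also have "\<dots> = (transpose_mat ?C *\<^sub>v w) \<bullet> conjugate v"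
    unfolding eig[symmetric] w_def using C v by simp
  also have "\<dots> = w \<bullet> (?C *\<^sub>v conjugate v)"
    using C v w by (simp add: transpose_vec_mult_scalar)
  also have "\<dots> = w \<bullet>c w"
    unfolding w_def using A v by (simp add: mult_mat_vec_of_real_conjugate)
  finally have eq: "a * (v \<bullet>c v) = w \<bullet>c w" .
  have pos: "v \<bullet>c v > 0" and nonneg: "w \<bullet>c w \<ge> 0" using v w by auto
  then have "Re a * Re (v \<bullet>c v) = Re (w \<bullet>c w)" "Im a * Re (v \<bullet>c v) = Im (w \<bullet>c w)"
    using arg_cong[OF eq, of Re] arg_cong[OF eq, of Im] by (simp_all add: less_complex_def)
  with pos nonneg show ?thesis
    by (auto simp: less_eq_complex_def less_complex_def) (metis zero_le_mult_iff not_less)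
qed

interpretation of_real_poly_hom: map_poly_inj_idom_hom "of_real :: real \<Rightarrow> complex" ..

lemma proots_prod_linear: "proots (\<Prod>e\<leftarrow>es. [:- e, 1:]) = mset (es :: 'a::idom list)"
proof (induction es)
  case (Cons a es)
  have "(\<Prod>e\<leftarrow>es. [:- e, 1:]) \<noteq> (0 :: 'a poly)" by (auto simp: prod_list_zero_iff)
  moreover have "(\<Prod>e\<leftarrow>a # es. [:- e, 1:]) = [:- a, 1:] * (\<Prod>e\<leftarrow>es. [:- e, 1:])" by simp
  ultimately show ?case using Cons by (simp del: mult_pCons_left add: proots_mult)
qed simp

lemma char_poly_gram_splits:
  fixes A :: "real mat"
  assumes A: "A \<in> carrier_mat k n"
  obtains es where "char_poly (transpose_mat A * A) = (\<Prod>e\<leftarrow>es. [:- e, 1:])" "\<forall>e\<in>set es. 0 \<le> e"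
proof -
  let ?B = "transpose_mat A * A"
  have B: "?B \<in> carrier_mat n n" using A by simp
  then have Bc: "map_mat complex_of_real ?B \<in> carrier_mat n n" by simp
  obtain as where as: "char_poly (map_mat complex_of_real ?B) = (\<Prod>a\<leftarrow>as. [:- a, 1:])"
    using char_poly_factorized[OF Bc] by blast
  have real: "complex_of_real (Re a) = a" and nonneg: "0 \<le> Re a" if "a \<in> set as" for a
  proof -
    have "poly (char_poly (map_mat complex_of_real ?B)) a = 0"
      unfolding as poly_prod_list prod_list_zero_iff using that by auto
    then have "0 \<le> a"
      using gram_eigenvalue_nonneg[OF A] eigenvalue_root_char_poly[OF Bc] by blast
    then show "complex_of_real (Re a) = a" "0 \<le> Re a"
      by (auto simp: less_eq_complex_def complex_eq_iff)
  qed
  have "map_poly complex_of_real (char_poly ?B) = char_poly (map_mat complex_of_real ?B)"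
    by (rule of_real_hom.char_poly_hom[OF B, symmetric])
  also have "\<dots> = (\<Prod>a\<leftarrow>as. [:- a, 1:])" by (rule as)
  also have "\<dots> = map_poly complex_of_real (\<Prod>e\<leftarrow>map Re as. [:- e, 1:])"
    by (simp add: of_real_poly_hom.hom_prod_list o_def real cong: map_cong)
  finally have "char_poly ?B = (\<Prod>e\<leftarrow>map Re as. [:- e, 1:])" by simp
  then show ?thesis using nonneg by (intro that[of "map Re as"]) auto
qed

section \<open>Traces\<close>

definition trace :: "'a::comm_ring_1 mat \<Rightarrow> 'a" where
  "trace A = (\<Sum>i<dim_row A. A $$ (i, i))"

lemma trace_mult_comm:
  assumes "A \<in> carrier_mat k n" and "B \<in> carrier_mat n k"
  shows "trace (A * B) = trace (B * A)"
proof -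
  have "trace (A * B) = (\<Sum>i<k. \<Sum>j<n. A $$ (i, j) * B $$ (j, i))"
    unfolding trace_def using assms by (auto simp: scalar_prod_def lessThan_atLeast0 intro!: sum.cong)
  also have "\<dots> = (\<Sum>j<n. \<Sum>i<k. B $$ (j, i) * A $$ (i, j))"
    by (subst sum.swap) (simp add: mult.commute)
  also have "\<dots> = trace (B * A)"
    unfolding trace_def using assms by (auto simp: scalar_prod_def lessThan_atLeast0 intro!: sum.cong)
  finally show ?thesis .
qed

lemma trace_similar:
  assumes "similar_mat_wit A B P Q"
  shows "trace A = trace B"
proof -
  note wit = similar_mat_witD[OF refl assms]
  have "trace A = trace ((P * B) * Q)" using wit(3) by (simp only:)
  also have "\<dots> = trace (Q * (P * B))" using wit(5-7) by (intro trace_mult_comm) auto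
  also have "Q * (P * B) = (Q * P) * B" using wit(5-7) by (intro assoc_mult_mat[symmetric])
  also have "\<dots> = B" using wit(2,5) by simp
  finally show ?thesis .
qed

lemma trace_eq_sum_list_diag_mat:
  assumes "T \<in> carrier_mat n n"
  shows "trace T = sum_list (diag_mat T)"
  using assms by (simp add: trace_def diag_mat_def sum_list_sum_nth lessThan_atLeast0)

lemma diag_mat_upper_triangular_square:
  fixes T :: "'a::comm_ring_1 mat"
  assumes T: "T \<in> carrier_mat n n" and ut: "upper_triangular T"
  shows "diag_mat (T * T) = map (\<lambda>e. e\<^sup>2) (diag_mat T)"
proof -
  have "(T * T) $$ (i, i) = (T $$ (i, i))\<^sup>2" if i: "i < n" for i
  proof -
    have "(T * T) $$ (i, i) = (\<Sum>k\<in>{0..<n}. T $$ (i, k) * T $$ (k, i))"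
      using T i by (simp add: scalar_prod_def)
    also have "\<dots> = (\<Sum>k\<in>{i}. T $$ (i, k) * T $$ (k, i))"
      using T ut i by (intro sum.mono_neutral_right)
        (auto simp: upper_triangular_def, metis linorder_neqE_nat mult_zero_left mult_zero_right)
    finally show ?thesis by (simp add: power2_eq_square)
  qed
  then show ?thesis using T by (auto simp: diag_mat_def)
qed

lemma trace_char_poly_roots:
  fixes B :: "'a::conjugatable_ordered_field mat"
  assumes B: "B \<in> carrier_mat n n" and split: "char_poly B = (\<Prod>e\<leftarrow>es. [:- e, 1:])"
  shows "trace B = sum_list es" and "trace (B * B) = sum_list (map (\<lambda>e. e\<^sup>2) es)"
proof -
  obtain T P Q where "schur_decomposition B es = (T, P, Q)" by (cases "schur_decomposition B es")
  from schur_decomposition[OF B split this] have wit: "similar_mat_wit B T P Q"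
    and ut: "upper_triangular T" and diag: "diag_mat T = es" by auto
  have T: "T \<in> carrier_mat n n" using similar_mat_witD2[OF B wit] by simp
  show "trace B = sum_list es"
    using trace_similar[OF wit] trace_eq_sum_list_diag_mat[OF T] diag by simp
  have "similar_mat_wit (B * B) (T * T) P Q"
    using similar_mat_wit_pow[OF wit, of 2] B T by (simp add: numeral_2_eq_2)
  then show "trace (B * B) = sum_list (map (\<lambda>e. e\<^sup>2) es)"
    using trace_eq_sum_list_diag_mat[of "T * T" n] diag_mat_upper_triangular_square[OF T ut] T diag
    by (simp add: trace_similar)
qed

lemma trace_transpose_mult_self:
  assumes "A \<in> carrier_mat k n"
  shows "trace (transpose_mat A * A) = (\<Sum>i<n. \<Sum>r<k. (A $$ (r, i))\<^sup>2)"
  using assms by (auto simp: trace_def scalar_prod_def lessThan_atLeast0 power2_eq_square intro!: sum.cong)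

lemma gram_index:
  assumes "B \<in> carrier_mat k m" and "i < m" and "j < m"
  shows "(transpose_mat B * B) $$ (i, j) = (\<Sum>r<k. B $$ (r, i) * B $$ (r, j))"
  using assms by (simp add: scalar_prod_def lessThan_atLeast0)

section \<open>Schatten norms for \<open>p = 2\<close> and \<open>p = 4\<close>\<close>

lemma sing_vals_gram_spectrum:
  fixes A :: "real mat"
  assumes A: "A \<in> carrier_mat k n"
  obtains es where "sing_vals A = mset (map sqrt es)" and "\<forall>e\<in>set es. 0 \<le> e"
    and "sum_list es = (\<Sum>i<n. \<Sum>r<k. (A $$ (r, i))\<^sup>2)"
    and "sum_list (map (\<lambda>e. e\<^sup>2) es) = (\<Sum>i<n. \<Sum>j<n. ((transpose_mat A * A) $$ (i, j))\<^sup>2)"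
proof -
  let ?B = "transpose_mat A * A"
  have B: "?B \<in> carrier_mat n n" using A by simp
  obtain es where split: "char_poly ?B = (\<Prod>e\<leftarrow>es. [:- e, 1:])" and nonneg: "\<forall>e\<in>set es. 0 \<le> e"
    using char_poly_gram_splits[OF A] by blast
  have "transpose_mat ?B = ?B"
    using A by (simp add: transpose_mult[of "transpose_mat A" n k A n])
  then have "?B * ?B = transpose_mat ?B * ?B" by simp
  then have "sum_list (map (\<lambda>e. e\<^sup>2) es) = (\<Sum>i<n. \<Sum>j<n. (?B $$ (j, i))\<^sup>2)"
    using trace_char_poly_roots(2)[OF B split] trace_transpose_mult_self[OF B] by simp
  also have "\<dots> = (\<Sum>i<n. \<Sum>j<n. (?B $$ (i, j))\<^sup>2)"
    by (rule sum.swap)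
  finally show ?thesis
    using nonneg trace_char_poly_roots(1)[OF B split] trace_transpose_mult_self[OF A]
    by (intro that) (simp_all add: sing_vals_def split proots_prod_linear)
qed

lemma schatten_nonneg: "0 \<le> schatten p A"
  by (simp add: schatten_def)

lemma schatten_powr_sqrt_spectrum:
  assumes "sing_vals A = mset (map sqrt es)" and "0 < p"
  shows "schatten p A powr p = (\<Sum>e\<leftarrow>es. sqrt e powr p)"
proof -
  have "(\<Sum>s\<in>#sing_vals A. s powr p) = (\<Sum>e\<leftarrow>es. sqrt e powr p)"
    unfolding assms(1) by (induction es) auto
  moreover have "0 \<le> (\<Sum>e\<leftarrow>es. sqrt e powr p)" by (rule sum_list_nonneg) auto
  ultimately show ?thesis using assms(2) by (simp add: schatten_def powr_powr powr_one)
qed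

lemma schatten_2_sq:
  assumes "A \<in> carrier_mat k n"
  shows "(schatten 2 A)\<^sup>2 = (\<Sum>i<n. \<Sum>r<k. (A $$ (r, i))\<^sup>2)"
proof -
  obtain es where sv: "sing_vals A = mset (map sqrt es)" and nonneg: "\<forall>e\<in>set es. 0 \<le> e"
    and sum: "sum_list es = (\<Sum>i<n. \<Sum>r<k. (A $$ (r, i))\<^sup>2)"
    and "sum_list (map (\<lambda>e. e\<^sup>2) es) = (\<Sum>i<n. \<Sum>j<n. ((transpose_mat A * A) $$ (i, j))\<^sup>2)"
    by (rule sing_vals_gram_spectrum[OF assms])
  have "(schatten 2 A)\<^sup>2 = (\<Sum>e\<leftarrow>es. sqrt e powr 2)"
    using schatten_powr_sqrt_spectrum[OF sv, of 2] schatten_nonneg[of 2 A] by simp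
  also have "\<dots> = sum_list es"
    using nonneg by (induction es) auto
  finally show ?thesis using sum by simp
qed

lemma schatten_4_pow4:
  assumes "A \<in> carrier_mat k n"
  shows "schatten 4 A ^ 4 = (\<Sum>i<n. \<Sum>j<n. ((transpose_mat A * A) $$ (i, j))\<^sup>2)"
proof -
  obtain es where sv: "sing_vals A = mset (map sqrt es)" and nonneg: "\<forall>e\<in>set es. 0 \<le> e"
    and "sum_list es = (\<Sum>i<n. \<Sum>r<k. (A $$ (r, i))\<^sup>2)"
    and sum: "sum_list (map (\<lambda>e. e\<^sup>2) es) = (\<Sum>i<n. \<Sum>j<n. ((transpose_mat A * A) $$ (i, j))\<^sup>2)"
    by (rule sing_vals_gram_spectrum[OF assms])
  have "schatten 4 A ^ 4 = (\<Sum>e\<leftarrow>es. sqrt e powr 4)"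
    using schatten_powr_sqrt_spectrum[OF sv, of 4] schatten_nonneg[of 4 A] by simp
  also have "\<dots> = (\<Sum>e\<leftarrow>es. e\<^sup>2)"
  proof -
    have "sqrt e ^ 4 = e\<^sup>2" if "0 \<le> e" for e :: real
    proof -
      have "sqrt e ^ 4 = (sqrt e ^ 2) ^ 2" by (simp flip: power_mult)
      then show ?thesis using that by simp
    qed
    then show ?thesis using nonneg by (induction es) auto
  qed
  finally show ?thesis using sum by simp
qed

lemma sum_list_squares_le_square_sum:
  fixes xs :: "'a::linordered_idom list"
  assumes "\<forall>x\<in>set xs. 0 \<le> x"
  shows "(\<Sum>x\<leftarrow>xs. x\<^sup>2) \<le> (sum_list xs)\<^sup>2"
  using assms
proof (induction xs)
  case (Cons a xs)
  then have "0 \<le> 2 * a * sum_list xs" by (simp add: sum_list_nonneg)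
  with Cons show ?case by (simp add: power2_sum)
qed simp

lemma schatten_4_le_schatten_2:
  assumes "A \<in> carrier_mat k n"
  shows "schatten 4 A \<le> schatten 2 A"
proof -
  obtain es where "sing_vals A = mset (map sqrt es)" and nonneg: "\<forall>e\<in>set es. 0 \<le> e"
    and sum: "sum_list es = (\<Sum>i<n. \<Sum>r<k. (A $$ (r, i))\<^sup>2)"
    and sum_sq: "sum_list (map (\<lambda>e. e\<^sup>2) es) = (\<Sum>i<n. \<Sum>j<n. ((transpose_mat A * A) $$ (i, j))\<^sup>2)"
    by (rule sing_vals_gram_spectrum[OF assms])
  have "schatten 4 A ^ 4 = (\<Sum>e\<leftarrow>es. e\<^sup>2)"
    using schatten_4_pow4[OF assms] sum_sq by simp
  also have "\<dots> \<le> (sum_list es)\<^sup>2"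
    using nonneg by (rule sum_list_squares_le_square_sum)
  also have "\<dots> = ((schatten 2 A)\<^sup>2)\<^sup>2"
    using schatten_2_sq[OF assms] sum by simp
  also have "\<dots> = schatten 2 A ^ 4" by (simp flip: power_mult)
  finally show ?thesis
    using schatten_nonneg[of 4 A] schatten_nonneg[of 2 A] by simp
qed

lemma schatten_inf_zero: "schatten_inf (0\<^sub>m k m) = 0"
proof -
  have "transpose_mat (0\<^sub>m k m) * 0\<^sub>m k m = (0\<^sub>m m m :: real mat)" by simp
  moreover have "proots (char_poly (0\<^sub>m m m :: real mat)) = mset (replicate m 0)"
    using char_poly_upper_triangular[of "0\<^sub>m m m :: real mat" m] proots_prod_linear[of "replicate m 0"]
    by simp
  ultimately have "sing_vals (0\<^sub>m k m) = mset (replicate m 0)"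
    by (simp add: sing_vals_def)
  then show ?thesis by (cases m) (simp_all add: schatten_inf_def)
qed

section \<open>Masked matrices\<close>

definition mask_mat :: "(nat \<Rightarrow> nat \<Rightarrow> bool) \<Rightarrow> 'a::zero mat \<Rightarrow> 'a mat" where
  "mask_mat K S = mat (dim_row S) (dim_col S) (\<lambda>(r, j). if K r j then S $$ (r, j) else 0)"

lemma dim_mask_mat [simp]:
  "dim_row (mask_mat K S) = dim_row S" "dim_col (mask_mat K S) = dim_col S"
  by (simp_all add: mask_mat_def)

lemma mask_mat_carrier [simp]: "S \<in> carrier_mat k m \<Longrightarrow> mask_mat K S \<in> carrier_mat k m"
  by (simp add: mask_mat_def)

lemma mask_mat_index [simp]:
  "r < dim_row S \<Longrightarrow> j < dim_col S \<Longrightarrow> mask_mat K S $$ (r, j) = (if K r j then S $$ (r, j) else 0)"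
  by (simp add: mask_mat_def)

lemma schatten_2_mask_mat_le:
  assumes S: "S \<in> carrier_mat k m"
  shows "schatten 2 (mask_mat K S) \<le> schatten 2 S"
proof (rule power2_le_imp_le)
  show "(schatten 2 (mask_mat K S))\<^sup>2 \<le> (schatten 2 S)\<^sup>2"
    using S by (simp add: schatten_2_sq[of _ k m] sum_mono)
qed (rule schatten_nonneg)

lemma sum_sq_cross_gram:
  fixes u v :: "nat \<Rightarrow> nat \<Rightarrow> 'a::comm_semiring_1"
  shows "(\<Sum>i<m. \<Sum>j<m. (\<Sum>r<N. u r i * v r j)\<^sup>2)
       = (\<Sum>a<N. \<Sum>b<N. (\<Sum>i<m. u a i * u b i) * (\<Sum>j<m. v a j * v b j))"
proof -
  have "(\<Sum>i<m. \<Sum>j<m. (\<Sum>r<N. u r i * v r j)\<^sup>2)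
      = (\<Sum>i<m. \<Sum>j<m. \<Sum>a<N. \<Sum>b<N. u a i * u b i * (v a j * v b j))"
    by (simp add: power2_eq_square sum_product mult_ac)
  also have "\<dots> = (\<Sum>a<N. \<Sum>b<N. \<Sum>i<m. \<Sum>j<m. u a i * u b i * (v a j * v b j))"
    by (subst sum.swap, subst (2) sum.swap, subst (3) sum.swap, subst (2) sum.swap) (rule refl)
  also have "\<dots> = (\<Sum>a<N. \<Sum>b<N. (\<Sum>i<m. u a i * u b i) * (\<Sum>j<m. v a j * v b j))"
    by (simp add: sum_product)
  finally show ?thesis .
qed

lemma sum_sq_gram_mask_le:
  fixes s :: "nat \<Rightarrow> nat \<Rightarrow> real"
  assumes mono: "\<And>r i j. K r i \<Longrightarrow> i \<le> j \<Longrightarrow> K r j"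
  defines "t \<equiv> \<lambda>r j. if K r j then s r j else 0"
  shows "(\<Sum>i<m. \<Sum>j<m. (\<Sum>r<N. t r i * t r j)\<^sup>2)
    \<le> 4 * (\<Sum>i<m. \<Sum>j<m. (\<Sum>r<N. s r i * s r j)\<^sup>2)"
    (is "?X \<le> 4 * ?Y")
proof -
  define H where "H i j = (\<Sum>r<N. t r i * s r j)" for i j
  define Z where "Z = (\<Sum>i<m. \<Sum>j<m. (H i j)\<^sup>2)"
  have upper: "(\<Sum>r<N. t r i * t r j) = H i j" if "i \<le> j" for i j
    unfolding H_def t_def by (rule sum.cong) (use mono that in auto)
  have "(\<Sum>r<N. t r i * t r j)\<^sup>2 \<le> (H i j)\<^sup>2 + (H j i)\<^sup>2" for i j
    using upper[of i j] upper[of j i] by (cases "i \<le> j") (simp_all add: mult.commute)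
  then have "?X \<le> (\<Sum>i<m. \<Sum>j<m. (H i j)\<^sup>2 + (H j i)\<^sup>2)"
    by (intro sum_mono)
  also have "\<dots> = 2 * Z"
    unfolding Z_def sum.distrib by (subst (2) sum.swap) simp
  finally have X_le: "?X \<le> 2 * Z" .
  define Pt where "Pt a b = (\<Sum>i<m. t a i * t b i)" for a b
  define Ps where "Ps a b = (\<Sum>i<m. s a i * s b i)" for a b
  have "Pt a b * Ps a b \<le> (Pt a b)\<^sup>2 / 4 + (Ps a b)\<^sup>2" for a b
    using zero_le_power2[of "Pt a b / 2 - Ps a b"] by (simp add: power2_eq_square algebra_simps)
  then have "Z \<le> (\<Sum>a<N. \<Sum>b<N. (Pt a b)\<^sup>2 / 4 + (Ps a b)\<^sup>2)"
    unfolding Z_def H_def sum_sq_cross_gram Pt_def[symmetric] Ps_def[symmetric] by (intro sum_mono)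
  also have "\<dots> = ?X / 4 + ?Y"
    unfolding sum_sq_cross_gram Pt_def Ps_def by (simp add: sum.distrib sum_divide_distrib power2_eq_square)
  finally show ?thesis using X_le by linarith
qed

lemma schatten_4_mask_mat_le:
  assumes S: "S \<in> carrier_mat k m" and mono: "\<And>r i j. K r i \<Longrightarrow> i \<le> j \<Longrightarrow> K r j"
  shows "schatten 4 (mask_mat K S) \<le> sqrt 2 * schatten 4 S"
proof -
  let ?T = "mask_mat K S"
  have T: "?T \<in> carrier_mat k m" using S by simp
  have "schatten 4 ?T ^ 4
      = (\<Sum>i<m. \<Sum>j<m. (\<Sum>r<k. (if K r i then S $$ (r, i) else 0)
                              * (if K r j then S $$ (r, j) else 0))\<^sup>2)"
    using S by (simp add: schatten_4_pow4[OF T] gram_index[OF T] del: index_mult_mat)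
  also have "\<dots> \<le> 4 * schatten 4 S ^ 4"
    using sum_sq_gram_mask_le[OF mono, where s = "\<lambda>r j. S $$ (r, j)" and m = m and N = k]
    by (simp add: schatten_4_pow4[OF S] gram_index[OF S])
  also have "\<dots> = (sqrt 2 * schatten 4 S) ^ 4"
    using power_mult[of "sqrt 2" 2 2] by (simp add: power_mult_distrib)
  finally show ?thesis
    using schatten_nonneg[of 4] by simp
qed

section \<open>Block structures\<close>

lemma block_structure_le:
  assumes bs: "block_structure ns m n" and "i < j" and "j \<le> m"
  shows "ns (Suc i) \<le> ns j"
  using assms(2,3)
proof (induction j)
  case (Suc j)
  have "ns j < ns (Suc j)" using bs Suc.prems unfolding block_structure_def by simp
  with Suc show ?case by (cases "i = j") auto
qed simp

lemma block_structure_block_unique: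
  assumes bs: "block_structure ns m n" and "i < m" and "j < m"
    and "ns i \<le> r" and "r < ns (Suc i)" and "ns j \<le> r" and "r < ns (Suc j)"
  shows "i = j"
  using block_structure_le[OF bs, of i j] block_structure_le[OF bs, of j i] assms(2-)
  by (cases i j rule: linorder_cases) auto

lemma Db_carrier: "X \<in> Db ns m n \<Longrightarrow> X \<in> carrier_mat n m"
  by (simp add: Db_def)

lemma Db_index_eq_0:
  "X \<in> Db ns m n \<Longrightarrow> r < n \<Longrightarrow> j < m \<Longrightarrow> \<not> (ns j \<le> r \<and> r < ns (Suc j))
    \<Longrightarrow> X $$ (r, j) = 0"
  by (simp add: Db_def)

lemma sing_vals_Db:
  assumes bs: "block_structure ns m n" and X: "X \<in> Db ns m n"
  shows "sing_vals X = mset (map (\<lambda>j. sqrt (\<Sum>r<n. (X $$ (r, j))\<^sup>2)) [0..<m])"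
proof -
  let ?B = "transpose_mat X * X"
  have B: "?B \<in> carrier_mat m m" using Db_carrier[OF X] by simp
  have "?B $$ (i, j) = 0" if "i < m" "j < m" "j < i" for i j
  proof -
    have "X $$ (r, i) * X $$ (r, j) = 0" if "r < n" for r
    proof (cases "ns i \<le> r \<and> r < ns (Suc i)")
      case True
      then have "\<not> (ns j \<le> r \<and> r < ns (Suc j))"
        using block_structure_block_unique[OF bs \<open>i < m\<close> \<open>j < m\<close>] \<open>j < i\<close> by auto
      then show ?thesis using Db_index_eq_0[OF X \<open>r < n\<close> \<open>j < m\<close>] by simp
    next
      case False
      then show ?thesis using Db_index_eq_0[OF X \<open>r < n\<close> \<open>i < m\<close>] by simp
    qed
    then show ?thesis
      using gram_index[OF Db_carrier[OF X] that(1,2)] by (simp add: sum.neutral del: mult_eq_0_iff)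
  qed
  then have "upper_triangular ?B" using B by auto
  then have "proots (char_poly ?B) = mset (diag_mat ?B)"
    by (subst char_poly_upper_triangular[OF B]) (simp_all only: proots_prod_linear)
  moreover have "diag_mat ?B = map (\<lambda>j. \<Sum>r<n. (X $$ (r, j))\<^sup>2) [0..<m]"
    using Db_carrier[OF X] by (auto simp: diag_mat_def scalar_prod_def lessThan_atLeast0 power2_eq_square)
  ultimately show ?thesis
    by (simp add: sing_vals_def image_mset.compositionality o_def)
qed

lemma Db_index_abs_le_1:
  assumes bs: "block_structure ns m n" and X: "X \<in> Db ns m n" and "schatten_inf X \<le> 1"
    and "r < n" and "j < m"
  shows "\<bar>X $$ (r, j)\<bar> \<le> 1"
proof -
  have "sqrt (\<Sum>r<n. (X $$ (r, j))\<^sup>2) \<le> schatten_inf X"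
    unfolding schatten_inf_def sing_vals_Db[OF bs X] using \<open>j < m\<close> by (intro Max_ge) auto
  then have "(\<Sum>r<n. (X $$ (r, j))\<^sup>2) \<le> 1"
    using \<open>schatten_inf X \<le> 1\<close> by (metis order_trans real_sqrt_le_1_iff)
  moreover have "(X $$ (r, j))\<^sup>2 \<le> (\<Sum>r<n. (X $$ (r, j))\<^sup>2)"
    using \<open>r < n\<close> by (intro member_le_sum) auto
  ultimately show ?thesis by (metis abs_square_le_1 order_trans)
qed

definition in_block_upto :: "(nat \<Rightarrow> nat) \<Rightarrow> nat \<Rightarrow> nat \<Rightarrow> bool" where
  "in_block_upto ns r j \<longleftrightarrow> (\<exists>i\<le>j. ns i \<le> r \<and> r < ns (Suc i))"

lemma in_block_upto_mono: "in_block_upto ns r i \<Longrightarrow> i \<le> j \<Longrightarrow> in_block_upto ns r j"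
  unfolding in_block_upto_def by (meson order.trans)

lemma block_upper_carrier: "M \<in> carrier_mat n n \<Longrightarrow> block_upper ns m M \<in> carrier_mat n n"
  by (simp add: block_upper_def)

lemma block_upper_mult_Db_index:
  assumes bs: "block_structure ns m n" and M: "M \<in> carrier_mat n n" and X: "X \<in> Db ns m n"
    and r: "r < n" and j: "j < m"
  shows "(block_upper ns m M * X) $$ (r, j) = (if in_block_upto ns r j then (M * X) $$ (r, j) else 0)"
proof -
  have X': "X \<in> carrier_mat n m" by (rule Db_carrier[OF X])
  have summand: "block_upper ns m M $$ (r, c) * X $$ (c, j)
      = (if in_block_upto ns r j then M $$ (r, c) * X $$ (c, j) else 0)" if c: "c < n" for c
  proof (cases "ns j \<le> c \<and> c < ns (Suc j)")
    case True
    then have "(\<exists>i j'. i \<le> j' \<and> j' < m \<and> ns i \<le> r \<and> r < ns (Suc i) \<and> ns j' \<le> c \<and> c < ns (Suc j'))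
        \<longleftrightarrow> in_block_upto ns r j"
      using block_structure_block_unique[OF bs _ j] j unfolding in_block_upto_def by blast
    then show ?thesis using M r c by (simp add: block_upper_def)
  next
    case False
    then show ?thesis using Db_index_eq_0[OF X c j] by simp
  qed
  have "(block_upper ns m M * X) $$ (r, j)
      = (\<Sum>c\<in>{0..<n}. block_upper ns m M $$ (r, c) * X $$ (c, j))"
    using block_upper_carrier[OF M, where ns = ns and m = m] X' r j by (simp add: scalar_prod_def)
  also have "\<dots> = (\<Sum>c\<in>{0..<n}. if in_block_upto ns r j then M $$ (r, c) * X $$ (c, j) else 0)"
    by (rule sum.cong) (simp_all add: summand)
  also have "\<dots> = (if in_block_upto ns r j then (M * X) $$ (r, j) else 0)"
    using M X' r j by (simp add: scalar_prod_def)
  finally show ?thesis .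
qed

lemma block_upper_mult_Db:
  assumes bs: "block_structure ns m n" and M: "M \<in> carrier_mat n n" and X: "X \<in> Db ns m n"
  shows "block_upper ns m M * X = mask_mat (in_block_upto ns) (M * X)"
proof (rule eq_matI)
  fix r j
  assume "r < dim_row (mask_mat (in_block_upto ns) (M * X))"
    and "j < dim_col (mask_mat (in_block_upto ns) (M * X))"
  then show "(block_upper ns m M * X) $$ (r, j) = mask_mat (in_block_upto ns) (M * X) $$ (r, j)"
    using block_upper_mult_Db_index[OF bs M X, of r j] M Db_carrier[OF X] by simp
qed (use block_upper_carrier[OF M, where ns = ns and m = m] M Db_carrier[OF X] in simp_all)

lemma schatten_block_upper_mult_Db_le:
  assumes bs: "block_structure ns m n" and M: "M \<in> carrier_mat n n" and X: "X \<in> Db ns m n"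
  shows "schatten 2 (block_upper ns m M * X) \<le> schatten 2 (M * X)"
    and "schatten 4 (block_upper ns m M * X) \<le> sqrt 2 * schatten 4 (M * X)"
proof -
  have MX: "M * X \<in> carrier_mat n m" using M Db_carrier[OF X] by simp
  show "schatten 2 (block_upper ns m M * X) \<le> schatten 2 (M * X)"
    unfolding block_upper_mult_Db[OF assms] by (rule schatten_2_mask_mat_le[OF MX])
  show "schatten 4 (block_upper ns m M * X) \<le> sqrt 2 * schatten 4 (M * X)"
    unfolding block_upper_mult_Db[OF assms] by (rule schatten_4_mask_mat_le[OF MX in_block_upto_mono])
qed

lemma schatten_2_mult_Db_le:
  assumes bs: "block_structure ns m n" and M: "M \<in> carrier_mat n n" and X: "X \<in> Db ns m n"
    and X_le: "schatten_inf X \<le> 1"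
  shows "schatten 2 (M * X) \<le> sqrt (real (m * n)) * (\<Sum>r<n. \<Sum>c<n. \<bar>M $$ (r, c)\<bar>)"
proof (rule power2_le_imp_le)
  define C where "C = (\<Sum>r<n. \<Sum>c<n. \<bar>M $$ (r, c)\<bar>)"
  have X': "X \<in> carrier_mat n m" by (rule Db_carrier[OF X])
  have "\<bar>(M * X) $$ (r, j)\<bar> \<le> C" if r: "r < n" and j: "j < m" for r j
  proof -
    have "(M * X) $$ (r, j) = (\<Sum>c<n. M $$ (r, c) * X $$ (c, j))"
      using M X' r j by (simp add: scalar_prod_def lessThan_atLeast0)
    then have "\<bar>(M * X) $$ (r, j)\<bar> \<le> (\<Sum>c<n. \<bar>M $$ (r, c)\<bar> * \<bar>X $$ (c, j)\<bar>)"
      by (simp add: sum_abs flip: abs_mult)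
    also have "\<dots> \<le> (\<Sum>c<n. \<bar>M $$ (r, c)\<bar>)"
      using Db_index_abs_le_1[OF bs X X_le _ j] by (intro sum_mono) (simp add: mult_left_le)
    also have "\<dots> \<le> C"
      unfolding C_def using r
      by (intro member_le_sum[where f = "\<lambda>r. \<Sum>c<n. \<bar>M $$ (r, c)\<bar>"]) (auto intro: sum_nonneg)
    finally show ?thesis .
  qed
  moreover have "0 \<le> C" unfolding C_def by (simp add: sum_nonneg)
  ultimately have entry_sq: "((M * X) $$ (r, j))\<^sup>2 \<le> C\<^sup>2" if "r < n" "j < m" for r j
    using that by (simp add: abs_le_square_iff[symmetric])
  have "(schatten 2 (M * X))\<^sup>2 = (\<Sum>j<m. \<Sum>r<n. ((M * X) $$ (r, j))\<^sup>2)"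
    by (rule schatten_2_sq) (use M X' in simp)
  also have "\<dots> \<le> (\<Sum>j<m. \<Sum>r<n. C\<^sup>2)"
    by (intro sum_mono entry_sq) auto
  also have "\<dots> = (sqrt (real (m * n)) * C)\<^sup>2"
    by (simp add: power_mult_distrib)
  finally show "(schatten 2 (M * X))\<^sup>2 \<le> (sqrt (real (m * n)) * C)\<^sup>2" .
  show "0 \<le> sqrt (real (m * n)) * C"
    using \<open>0 \<le> C\<close> by simp
qed

lemma bdd_above_schatten_mult_Db:
  assumes bs: "block_structure ns m n" and M: "M \<in> carrier_mat n n" and p: "p \<in> {2, 4}"
  shows "bdd_above {schatten p (M * X) | X. X \<in> Db ns m n \<and> schatten_inf X \<le> 1}"
proof (rule bdd_aboveI)
  fix x assume "x \<in> {schatten p (M * X) | X. X \<in> Db ns m n \<and> schatten_inf X \<le> 1}"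
  then obtain X where X: "X \<in> Db ns m n" "schatten_inf X \<le> 1" and x: "x = schatten p (M * X)"
    by blast
  have "schatten 4 (M * X) \<le> schatten 2 (M * X)"
    using M Db_carrier[OF X(1)] by (intro schatten_4_le_schatten_2[of _ n m]) simp
  with p x schatten_2_mult_Db_le[OF bs M X]
  show "x \<le> sqrt (real (m * n)) * (\<Sum>r<n. \<Sum>c<n. \<bar>M $$ (r, c)\<bar>)"
    by auto
qed

lemma bnorm_le_mult:
  assumes c: "0 \<le> c"
    and le: "\<And>X. X \<in> Db ns m n \<Longrightarrow> schatten p (U * X) \<le> c * schatten p (M * X)"
    and bdd: "bdd_above {schatten p (M * X) | X. X \<in> Db ns m n \<and> schatten_inf X \<le> 1}"
  shows "bnorm ns m n p U \<le> c * bnorm ns m n p M"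
  unfolding bnorm_def
proof (rule cSup_least)
  have "0\<^sub>m n m \<in> Db ns m n" by (simp add: Db_def)
  then show "{schatten p (U * X) | X. X \<in> Db ns m n \<and> schatten_inf X \<le> 1} \<noteq> {}"
    using schatten_inf_zero[of n m] by auto
next
  fix x assume "x \<in> {schatten p (U * X) | X. X \<in> Db ns m n \<and> schatten_inf X \<le> 1}"
  then obtain X where X: "X \<in> Db ns m n" "schatten_inf X \<le> 1" and x: "x = schatten p (U * X)"
    by blast
  have "schatten p (M * X) \<le> Sup {schatten p (M * X) | X. X \<in> Db ns m n \<and> schatten_inf X \<le> 1}"
    using X bdd by (intro cSup_upper) auto
  with le[OF X(1)] c
  show "x \<le> c * Sup {schatten p (M * X) | X. X \<in> Db ns m n \<and> schatten_inf X \<le> 1}"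
    unfolding x by (meson mult_left_mono order_trans)
qed

theorem mainTheorem10:
  fixes ns :: "nat \<Rightarrow> nat" and m n q :: nat and M :: "real mat"
  assumes "block_structure ns m n"
    and "q \<in> {1, 2}"
    and "M \<in> carrier_mat n n"
  shows "bnorm ns m n (2 ^ q) (block_upper ns m M) \<le> 2 ^ (q - 1) * bnorm ns m n (2 ^ q) M"
proof -
  note le = schatten_block_upper_mult_Db_le[OF assms(1,3)]
  note bdd = bdd_above_schatten_mult_Db[OF assms(1,3)]
  from assms(2) consider "q = 1" | "q = 2" by blast
  then show ?thesis
  proof cases
    case 1
    show ?thesis
      using bnorm_le_mult[of 1, OF _ _ bdd] le(1) 1 by simp
  next
    case 2
    have "schatten 4 (block_upper ns m M * X) \<le> 2 * schatten 4 (M * X)" if "X \<in> Db ns m n" for X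
      using le(2)[OF that] mult_right_mono[OF less_imp_le[OF sqrt2_less_2] schatten_nonneg]
      by (rule order_trans)
    then show ?thesis
      using bnorm_le_mult[of 2, OF _ _ bdd] 2 by simp
  qed
qed

end
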